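(* Let $\mathcal{F}$ be a fundamental polygon for a discrete subgroup $\Gamma\leq\mathrm{PSL}_2(\mathbb{R})$ of finite covolume, and let $I,J$ be disjoint, non-empty, open, connected subsegments of $\partial\mathcal{F}$ such that no endpoint of $I$ lies on the same edge of $\mathcal{F}$ as an endpoint of $J$. Then $d_{I,J}>0$.
   Context: A fundamental polygon is an open convex $\mathcal{F}\subset\mathbb{H}$ whose closure is a convex hyperbolic polygon with finitely many geodesic sides, every point of $\mathbb{H}$ $\Gamma$-equivalent to a point of $\overline{\mathcal{F}}$, distinct $\Gamma$-equivalent points of $\overline{\mathcal{F}}$ lying on $\partial\mathcal{F}$; its edges are the maximal geodesic segments of $\partial\mathcal{F}$. Orient $\partial\mathcal{F}$ positively (with $\mathcal{F}$ on the left). Let $z_0\in\overline I$, $z_1\in\overline J$ be the endpoints such that the open arc of $\partial\mathcal{F}$ running positively from $z_1$ to $z_0$ is disjoint from $I\cup J$. Let $S$ be the complete geodesic through $z_0,z_1$ oriented from $z_0$ to $z_1$, with backward endpoint $x_0$ and forward endpoint $x_1$; take $\sigma\in\mathrm{PSL}_2(\mathbb{R})$ with $\sigma S=i\mathbb{R}$, $\sigma x_0=\infty$, $\sigma x_1=0$, and $\tilde B=\sigma^{-1}\{\Re z\geq0\}$. Then $\mathcal{P}_{I,J}=\tilde B\cap\mathcal{F}$ and $d_{I,J}$ is its hyperbolic area (measure $dx\,dy/y^2$). *)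

theory Defs
  imports "HOL-Analysis.Analysis"
begin

definition UHP :: "complex set" where
  "UHP = {z. Im z > 0}"

type_synonym mat2 = "real^2^2"

definition SL2 :: "mat2 set" where
  "SL2 = {M. det M = 1}"

text \<open>A subgroup of PSL2(R)
  is represented by a subgroup of SL2(R) (e.g. its full preimage); the action and
  discreteness do not depend on this choice.\<close>
definition mob :: "mat2 \<Rightarrow> complex \<Rightarrow> complex" where
  "mob M z = (of_real (M$1$1) * z + of_real (M$1$2)) / (of_real (M$2$1) * z + of_real (M$2$2))"

definition subgroup_SL2 :: "mat2 set \<Rightarrow> bool" where
  "subgroup_SL2 G \<longleftrightarrow> G \<subseteq> SL2 \<and> mat 1 \<in> G \<and>
     (\<forall>g\<in>G. \<forall>h\<in>G. g ** h \<in> G) \<and> (\<forall>g\<in>G. matrix_inv g \<in> G)"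

definition discrete_subgroup :: "mat2 set \<Rightarrow> bool" where
  "discrete_subgroup G \<longleftrightarrow> subgroup_SL2 G \<and>
     (\<forall>g\<in>G. \<exists>e>0. \<forall>h\<in>G. dist h g < e \<longrightarrow> h = g)"

definition hyp_area :: "complex set \<Rightarrow> ennreal" where
  "hyp_area S = (\<integral>\<^sup>+ z. ennreal (indicator S z / (Im z)^2) \<partial>lborel)"

text \<open>Every complete geodesic is the preimage of the imaginary axis under some
  element of PSL2(R), every hyperbolic half plane the preimage of a right half plane.\<close>
definition geodesic_line :: "mat2 \<Rightarrow> complex set" where
  "geodesic_line M = {z \<in> UHP. Re (mob M z) = 0}"

definition open_hp :: "mat2 \<Rightarrow> complex set" where
  "open_hp M = {z \<in> UHP. Re (mob M z) > 0}"

definition closed_hp :: "mat2 \<Rightarrow> complex set" where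
  "closed_hp M = {z \<in> UHP. Re (mob M z) \<ge> 0}"

definition Fbar :: "complex set \<Rightarrow> complex set" where
  "Fbar F = closure F \<inter> UHP"

definition bdF :: "complex set \<Rightarrow> complex set" where
  "bdF F = Fbar F - F"

text \<open>An open convex F whose closure is a convex hyperbolic polygon with finitely many
  geodesic sides is exactly a non-empty finite intersection of open hyperbolic half planes.\<close>
definition fundamental_polygon :: "mat2 set \<Rightarrow> complex set \<Rightarrow> bool" where
  "fundamental_polygon G F \<longleftrightarrow>
     F \<noteq> {} \<and>
     (\<exists>Ms. finite Ms \<and> Ms \<subseteq> SL2 \<and> F = UHP \<inter> \<Inter>(open_hp ` Ms)) \<and>
     (\<forall>z\<in>UHP. \<exists>g\<in>G. mob g z \<in> Fbar F) \<and>
     (\<forall>z\<in>Fbar F. \<forall>w\<in>Fbar F. z \<noteq> w \<and> (\<exists>g\<in>G. mob g z = w) \<longrightarrow> z \<in> bdF F \<and> w \<in> bdF F)"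

definition geodesic_subset :: "complex set \<Rightarrow> bool" where
  "geodesic_subset E \<longleftrightarrow> (\<exists>M\<in>SL2. E \<subseteq> geodesic_line M)"

definition is_edge :: "complex set \<Rightarrow> complex set \<Rightarrow> bool" where
  "is_edge F E \<longleftrightarrow> E \<subseteq> bdF F \<and> connected E \<and> geodesic_subset E \<and>
     (\<exists>a\<in>E. \<exists>b\<in>E. a \<noteq> b) \<and>
     (\<forall>E'. E \<subseteq> E' \<and> E' \<subseteq> bdF F \<and> connected E' \<and> geodesic_subset E' \<longrightarrow> E' = E)"

definition boundary_subsegment :: "complex set \<Rightarrow> complex set \<Rightarrow> bool" where
  "boundary_subsegment F I \<longleftrightarrow> I \<noteq> {} \<and> I \<subseteq> bdF F \<and>
     openin (top_of_set (bdF F)) I \<and> connected I"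

text \<open>The Cayley map identifies the upper half plane together with its ideal boundary
  R \<union> {\<infinity>} with the closed unit disk; points of the closed disk are used as
  coordinates for points of H \<union> R \<union> {\<infinity>} (\<infinity> corresponds to 1, 0 to -1, the imaginary
  axis to the diameter (-1,1), its closure to [-1,1]).\<close>
definition cayley :: "complex \<Rightarrow> complex" where
  "cayley z = (z - \<i>) / (z + \<i>)"

text \<open>The action of M on the closed disk: the conjugate of mob M by the Cayley map,
  dmob M (cayley z) = cayley (mob M z); it extends continuously to the ideal boundary.\<close>
definition dmob :: "mat2 \<Rightarrow> complex \<Rightarrow> complex" where
  "dmob M w = (let a = M$1$1; b = M$1$2; c = M$2$1; d = M$2$2;
                   \<alpha> = Complex ((a + d) / 2) ((b - c) / 2);
                   \<beta> = Complex ((a - d) / 2) (- (b + c) / 2)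
               in (\<alpha> * w + \<beta>) / (cnj \<beta> * w + cnj \<alpha>))"

text \<open>Endpoints (possibly ideal) of a subset of H, in disk coordinates.\<close>
definition ends :: "complex set \<Rightarrow> complex set" where
  "ends S = closure (cayley ` S) - cayley ` S"

text \<open>Boundary of F in the compactification (includes ideal vertices), disk coordinates.\<close>
definition cbd :: "complex set \<Rightarrow> complex set" where
  "cbd F = frontier (cayley ` F)"

text \<open>Open arc of the compactified boundary X running positively (counterclockwise,
  i.e. with F on the left) from a to b.  Angles are measured in the disk chart
  w \<mapsto> dmob \<tau> w, in which an interior point of F sits at the centre 0
  (hyperbolically convex F is then star shaped about 0).\<close>
definition pos_arc :: "mat2 \<Rightarrow> complex set \<Rightarrow> complex \<Rightarrow> complex \<Rightarrow> complex set" where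
  "pos_arc \<tau> X a b = {w \<in> X. 0 < Arg2pi (dmob \<tau> w / dmob \<tau> a) \<and>
                          Arg2pi (dmob \<tau> w / dmob \<tau> a) < Arg2pi (dmob \<tau> b / dmob \<tau> a)}"

end

theory Submission
  imports Defs
begin

text \<open>If the area vanished, the open polygon \<open>F\<close> would lie in the closed half plane
  \<open>Re (\<sigma> z) \<le> 0\<close>, whose boundary geodesic \<open>S\<close> joins \<open>z0\<close> and \<open>z1\<close>.  In the Klein model \<open>F\<close> is an
  open convex polygon and \<open>S\<close> a straight chord; the segment joining the images of \<open>z0\<close> and \<open>z1\<close>
  lies in the closure of the polygon but, the polygon being open and on one side of the chord,
  not in the polygon itself.  Its preimage is therefore a connected piece of \<open>\<partial>F \<inter> S\<close>, and the
  edge of \<open>F\<close> containing it has both \<open>z0\<close> and \<open>z1\<close> in its closure, against the hypothesis on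
  edges.  Only the polygon structure of \<open>F\<close>, the edge condition and the position of \<open>z0\<close>, \<open>z1\<close>
  on \<open>S\<close> are used.\<close>

definition cayley_inv :: "complex \<Rightarrow> complex" where
  "cayley_inv w = \<i> * (1 + w) / (1 - w)"

definition poincare_to_klein :: "complex \<Rightarrow> complex" where
  "poincare_to_klein w = 2 * w / (1 + of_real ((cmod w)^2))"

definition klein_to_poincare :: "complex \<Rightarrow> complex" where
  "klein_to_poincare u = u / (1 + of_real (sqrt (1 - (cmod u)^2)))"

definition klein_coord :: "complex \<Rightarrow> complex" where
  "klein_coord z = poincare_to_klein (cayley z)"

definition klein_point :: "complex \<Rightarrow> complex" where
  "klein_point u = cayley_inv (klein_to_poincare u)"

definition Re_mob_numer :: "mat2 \<Rightarrow> complex \<Rightarrow> real" where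
  "Re_mob_numer M z = M$1$1 * M$2$1 * ((Re z)^2 + (Im z)^2) + (M$1$1 * M$2$2 + M$1$2 * M$2$1) * Re z
     + M$1$2 * M$2$2"

text \<open>In the Klein model geodesics are chords: \<open>klein_aff M\<close> vanishes exactly on the image of
  \<open>geodesic_line M\<close> and is negative exactly on the image of \<open>open_hp M\<close>.\<close>
definition klein_normal :: "mat2 \<Rightarrow> complex" where
  "klein_normal M = Complex (M$1$2 * M$2$2 - M$1$1 * M$2$1) (M$1$1 * M$2$2 + M$1$2 * M$2$1)"

definition klein_aff :: "mat2 \<Rightarrow> complex \<Rightarrow> real" where
  "klein_aff M u = (klein_normal M \<bullet> u - (M$1$1 * M$2$1 + M$1$2 * M$2$2)) / 2"

definition klein_polygon :: "mat2 set \<Rightarrow> complex set" where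
  "klein_polygon Ms = ball 0 1 \<inter> (\<Inter>M\<in>Ms. {u. klein_aff M u < 0})"

section \<open>Half planes and geodesics in Klein coordinates\<close>

lemma Re_mob_eq:
  assumes "det M = 1" "Im z > 0"
  shows "Re (mob M z) = Re_mob_numer M z / ((M$2$1 * Re z + M$2$2)^2 + (M$2$1 * Im z)^2)"
    and "(M$2$1 * Re z + M$2$2)^2 + (M$2$1 * Im z)^2 > 0"
proof -
  have det: "M$1$1 * M$2$2 - M$1$2 * M$2$1 = 1" using assms(1) by (simp add: det_2)
  show "(M$2$1 * Re z + M$2$2)^2 + (M$2$1 * Im z)^2 > 0"
  proof (rule ccontr)
    assume "\<not> ?thesis"
    then have "M$2$1 * Re z + M$2$2 = 0" "M$2$1 * Im z = 0"
      by (smt (verit) sum_power2_eq_zero_iff zero_le_power2)+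
    then show False using det assms(2) by auto
  qed
  show "Re (mob M z) = Re_mob_numer M z / ((M$2$1 * Re z + M$2$2)^2 + (M$2$1 * Im z)^2)"
    unfolding mob_def Re_mob_numer_def Re_divide by (simp add: algebra_simps power2_eq_square)
qed

lemma Re_mob_pos_iff:
  "det M = 1 \<Longrightarrow> Im z > 0 \<Longrightarrow> Re (mob M z) > 0 \<longleftrightarrow> Re_mob_numer M z > 0"
  using Re_mob_eq[of M z] by (simp add: zero_less_divide_iff)

lemma Re_mob_eq_0_iff:
  "det M = 1 \<Longrightarrow> Im z > 0 \<Longrightarrow> Re (mob M z) = 0 \<longleftrightarrow> Re_mob_numer M z = 0"
  using Re_mob_eq[of M z] by (metis divide_eq_0_iff order_less_irrefl)

lemma poincare_to_klein_scaleR: "poincare_to_klein w = (2 / (1 + (cmod w)^2)) *\<^sub>R w"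
  by (simp add: poincare_to_klein_def scaleR_conv_of_real field_simps)

lemma klein_coord_eq:
  assumes "Im z > 0"
  shows "klein_coord z = Complex (((Re z)^2 + (Im z)^2 - 1) / ((Re z)^2 + (Im z)^2 + 1))
                                 (- 2 * Re z / ((Re z)^2 + (Im z)^2 + 1))"
proof -
  obtain x y where z: "z = Complex x y" by (cases z)
  have y: "y > 0" using assms z by simp
  define D where "D = x^2 + (y+1)^2"
  have D: "D > 0" using y unfolding D_def by (intro add_nonneg_pos) auto
  have r: "x^2 + y^2 + 1 > 0" by (smt (verit) zero_le_power2)
  have c: "cayley z = Complex ((x^2 + y^2 - 1) / D) (- 2 * x / D)"
    unfolding cayley_def z D_def using D[unfolded D_def]
    by (simp add: complex_eq_iff Re_divide Im_divide field_simps power2_eq_square)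
  have n: "1 + (cmod (cayley z))^2 = 2 * (x^2 + y^2 + 1) / D"
    unfolding cmod_power2 c using D
    by (simp add: field_simps power2_eq_square) (simp add: D_def algebra_simps power2_eq_square)
  have "klein_coord z = (2 / (1 + (cmod (cayley z))^2)) *\<^sub>R cayley z"
    by (simp add: klein_coord_def poincare_to_klein_scaleR)
  also have "\<dots> = cayley z * of_real (D / (x^2 + y^2 + 1))"
  proof -
    have "2 / (2 * (x^2 + y^2 + 1) / D) = D / (x^2 + y^2 + 1)" using D r by (simp add: field_simps)
    then show ?thesis unfolding n scaleR_conv_of_real by (simp only: mult.commute)
  qed
  also have "\<dots> = Complex ((x^2 + y^2 - 1) / (x^2 + y^2 + 1)) (- 2 * x / (x^2 + y^2 + 1))"
    unfolding c using D r by (simp add: complex_eq_iff)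
  finally show ?thesis using z by simp
qed

lemma klein_aff_klein_coord:
  assumes "Im z > 0"
  shows "klein_aff M (klein_coord z) = - Re_mob_numer M z / ((Re z)^2 + (Im z)^2 + 1)"
proof -
  define r where "r = (Re z)^2 + (Im z)^2"
  have "r + 1 \<noteq> 0" unfolding r_def by (smt (verit) zero_le_power2)
  then show ?thesis
    unfolding klein_coord_eq[OF assms] r_def[symmetric] klein_aff_def klein_normal_def
      Re_mob_numer_def inner_complex_def complex.sel
    by (simp add: field_split_simps) algebra
qed

lemma klein_aff_klein_coord_neg_iff:
  assumes "det M = 1" "Im z > 0"
  shows "klein_aff M (klein_coord z) < 0 \<longleftrightarrow> z \<in> open_hp M"
proof -
  have "(Re z)^2 + (Im z)^2 + 1 > 0" by (smt (verit) zero_le_power2)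
  then show ?thesis
    using assms Re_mob_pos_iff[OF assms]
    by (simp add: klein_aff_klein_coord zero_less_divide_iff open_hp_def UHP_def)
qed

lemma klein_aff_klein_coord_eq_0_iff:
  assumes "det M = 1" "Im z > 0"
  shows "klein_aff M (klein_coord z) = 0 \<longleftrightarrow> z \<in> geodesic_line M"
proof -
  have "(Re z)^2 + (Im z)^2 + 1 > 0" by (smt (verit) zero_le_power2)
  then show ?thesis
    using assms Re_mob_eq_0_iff[OF assms]
    by (simp add: klein_aff_klein_coord geodesic_line_def UHP_def)
qed

lemma klein_normal_nonzero:
  assumes "det M = 1"
  shows "klein_normal M \<noteq> 0"
proof -
  define a b c d where "a = M$1$1" "b = M$1$2" "c = M$2$1" "d = M$2$2"
  have det: "a*d - b*c = 1" using assms by (simp add: det_2 a_b_c_d_def)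
  have "(b*d - a*c)^2 + (a*d + b*c)^2 = (a^2 + b^2) * (c^2 + d^2)" by algebra
  moreover have "a^2 + b^2 > 0" "c^2 + d^2 > 0" using det
    by (smt (verit) mult_eq_0_iff power2_eq_square sum_power2_eq_zero_iff zero_le_power2)+
  ultimately show ?thesis
    unfolding klein_normal_def a_b_c_d_def[symmetric] complex_eq_iff by auto
qed

lemma klein_aff_diff: "klein_aff M u - klein_aff M v = klein_normal M \<bullet> (u - v) / 2"
  by (simp add: klein_aff_def inner_diff_right diff_divide_distrib)

lemma klein_aff_neg_eq_halfspace:
  "{u. klein_aff M u < 0} = {u. klein_normal M \<bullet> u < M$1$1 * M$2$1 + M$1$2 * M$2$2}"
  and klein_aff_nonneg_eq_halfspace:
  "{u. klein_aff M u \<ge> 0} = {u. klein_normal M \<bullet> u \<ge> M$1$1 * M$2$1 + M$1$2 * M$2$2}"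
  and klein_aff_zero_eq_hyperplane:
  "{u. klein_aff M u = 0} = {u. klein_normal M \<bullet> u = M$1$1 * M$2$1 + M$1$2 * M$2$2}"
  by (auto simp: klein_aff_def)

lemma klein_aff_poincare_to_klein:
  "klein_aff M (poincare_to_klein w) * (1 + (cmod w)^2)
     = klein_normal M \<bullet> w - (M$1$1 * M$2$1 + M$1$2 * M$2$2) * (1 + (cmod w)^2) / 2"
proof -
  have "1 + (cmod w)^2 \<noteq> 0" by (smt (verit) zero_le_power2)
  then show ?thesis
    by (simp add: klein_aff_def poincare_to_klein_scaleR field_simps)
qed

lemma dmob_in_Reals_iff:
  assumes "det M = 1" "cmod w \<le> 1"
  shows "dmob M w \<in> \<real> \<longleftrightarrow> klein_aff M (poincare_to_klein w) = 0"
proof -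
  define a b c d where "a = M$1$1" "b = M$1$2" "c = M$2$1" "d = M$2$2"
  have det: "a*d - b*c = 1" using assms(1) by (simp add: det_2 a_b_c_d_def)
  define \<alpha> where "\<alpha> = Complex ((a + d) / 2) ((b - c) / 2)"
  define \<beta> where "\<beta> = Complex ((a - d) / 2) (- (b + c) / 2)"
  have dm: "dmob M w = (\<alpha> * w + \<beta>) / (cnj \<beta> * w + cnj \<alpha>)"
    unfolding dmob_def \<alpha>_def \<beta>_def a_b_c_d_def Let_def by simp
  have "(cmod \<alpha>)^2 = (cmod \<beta>)^2 + 1"
    using det unfolding cmod_power2 \<alpha>_def \<beta>_def by (simp add: power2_eq_square field_simps)
  then have "cmod \<beta> < cmod \<alpha>"
    by (smt (verit) norm_ge_zero power_mono)
  moreover have "cmod (cnj \<beta> * w) \<le> cmod \<beta>"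
    using assms(2) by (simp add: norm_mult mult_left_le)
  ultimately have den: "cnj \<beta> * w + cnj \<alpha> \<noteq> 0"
    by (metis add.commute complex_mod_cnj less_irrefl minus_unique norm_minus_cancel order_le_less_trans)
  obtain u v where w: "w = Complex u v" by (cases w)
  have "Im ((\<alpha> * w + \<beta>) * cnj (cnj \<beta> * w + cnj \<alpha>))
      = klein_normal M \<bullet> w - (a * c + b * d) * (1 + (cmod w)^2) / 2"
    unfolding \<alpha>_def \<beta>_def w klein_normal_def a_b_c_d_def[symmetric] inner_complex_def cmod_power2
    by (simp add: algebra_simps power2_eq_square) (simp add: field_simps)
  also have "\<dots> = klein_aff M (poincare_to_klein w) * (1 + (cmod w)^2)"
    unfolding klein_aff_poincare_to_klein a_b_c_d_def ..
  finally have key: "Im ((\<alpha> * w + \<beta>) * cnj (cnj \<beta> * w + cnj \<alpha>))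
      = klein_aff M (poincare_to_klein w) * (1 + (cmod w)^2)" .
  have "dmob M w \<in> \<real> \<longleftrightarrow> Im ((\<alpha> * w + \<beta>) * cnj (cnj \<beta> * w + cnj \<alpha>)) = 0"
    unfolding complex_is_Real_iff dm complex_div_cnj[of "\<alpha> * w + \<beta>"] using den
    by (simp add: Im_divide_of_real)
  also have "\<dots> \<longleftrightarrow> klein_aff M (poincare_to_klein w) = 0"
    unfolding key by (smt (verit) mult_eq_0_iff zero_le_power2)
  finally show ?thesis .
qed

lemma klein_to_poincare_scaleR:
  "klein_to_poincare u = (1 / (1 + sqrt (1 - (cmod u)^2))) *\<^sub>R u"
  by (simp add: klein_to_poincare_def scaleR_conv_of_real field_simps)

lemma klein_to_poincare_to_klein:
  assumes "cmod w \<le> 1"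
  shows "klein_to_poincare (poincare_to_klein w) = w"
proof -
  define n where "n = (cmod w)^2"
  have n: "0 \<le> n" "n \<le> 1" using assms unfolding n_def by (auto simp: power_le_one)
  have "cmod (poincare_to_klein w) = 2 / (1 + n) * cmod w"
    using n unfolding poincare_to_klein_scaleR n_def by simp
  then have "(cmod (poincare_to_klein w))^2 = 4 * n / (1 + n)^2"
    unfolding n_def by (simp add: power_mult_distrib power_divide)
  moreover have "(1 + n)^2 - 4 * n = (1 - n)^2" by algebra
  ultimately have "1 - (cmod (poincare_to_klein w))^2 = ((1 - n) / (1 + n))^2"
    using n by (simp add: power_divide diff_divide_eq_iff)
  then have "sqrt (1 - (cmod (poincare_to_klein w))^2) = (1 - n) / (1 + n)" using n by simp
  then have "1 + sqrt (1 - (cmod (poincare_to_klein w))^2) = 2 / (1 + n)"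
    using n by (simp add: field_simps)
  moreover have "(1 + n) / 2 * (2 / (1 + n)) = 1" using n by simp
  ultimately show ?thesis
    unfolding klein_to_poincare_scaleR poincare_to_klein_scaleR n_def by (simp add: algebra_simps)
qed

lemma klein_to_poincare_norm:
  assumes "cmod u \<le> 1"
  shows "(cmod (klein_to_poincare u))^2 = (1 - sqrt (1 - (cmod u)^2)) / (1 + sqrt (1 - (cmod u)^2))"
proof -
  define s where "s = sqrt (1 - (cmod u)^2)"
  have "(cmod u)^2 \<le> 1" using assms by (simp add: power_le_one)
  then have s: "0 \<le> s" "(cmod u)^2 = (1 - s) * (1 + s)"
    unfolding s_def by (simp_all add: algebra_simps flip: power2_eq_square)
  have "(cmod (klein_to_poincare u))^2 = (cmod u)^2 / (1 + s)^2"
    using s unfolding klein_to_poincare_scaleR s_def[symmetric]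
    by (simp add: power_mult_distrib power_divide)
  also have "\<dots> = (1 - s) / (1 + s)" using s by (simp add: power2_eq_square)
  finally show ?thesis unfolding s_def .
qed

lemma poincare_to_klein_to_poincare:
  assumes "cmod u \<le> 1"
  shows "poincare_to_klein (klein_to_poincare u) = u"
proof -
  define s where "s = sqrt (1 - (cmod u)^2)"
  have s: "0 \<le> s" unfolding s_def using assms by (simp add: power_le_one)
  have "2 / (1 + (1 - s) / (1 + s)) * (1 / (1 + s)) = 1" using s by (simp add: field_simps)
  then show ?thesis
    unfolding poincare_to_klein_scaleR klein_to_poincare_norm[OF assms] s_def[symmetric]
    unfolding klein_to_poincare_scaleR s_def[symmetric] by simp
qed

lemma norm_klein_to_poincare_less_1:
  assumes "cmod u < 1"
  shows "cmod (klein_to_poincare u) < 1"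
proof -
  define s where "s = sqrt (1 - (cmod u)^2)"
  have "s > 0" unfolding s_def using assms by (simp add: power_less_one_iff)
  then have "(1 - s) / (1 + s) < 1" by simp
  then have "(cmod (klein_to_poincare u))^2 < 1"
    using assms unfolding s_def by (simp add: klein_to_poincare_norm)
  then show ?thesis by (simp add: power_less_one_iff)
qed

lemma norm_poincare_to_klein_less_1:
  assumes "cmod w < 1"
  shows "cmod (poincare_to_klein w) < 1"
proof -
  have "(1 - cmod w)^2 > 0" using assms by simp
  then have "2 * cmod w < 1 + (cmod w)^2" by (simp add: power2_eq_square algebra_simps)
  then show ?thesis unfolding poincare_to_klein_scaleR by (simp add: add_pos_nonneg)
qed

lemma norm_cayley_less_1:
  assumes "Im z > 0"
  shows "cmod (cayley z) < 1"
proof -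
  have "z + \<i> \<noteq> 0" using assms by (auto simp: complex_eq_iff)
  moreover have "(cmod (z - \<i>))^2 < (cmod (z + \<i>))^2"
    unfolding cmod_power2 using assms by (simp add: power2_eq_square algebra_simps)
  then have "cmod (z - \<i>) < cmod (z + \<i>)" by (simp add: power_less_imp_less_base)
  ultimately show ?thesis unfolding cayley_def by (simp add: norm_divide)
qed

lemma cayley_inv_cayley:
  assumes "Im z > 0"
  shows "cayley_inv (cayley z) = z"
proof -
  have "z + \<i> \<noteq> 0" using assms by (auto simp: complex_eq_iff)
  then have "1 + cayley z = 2 * z / (z + \<i>)" "1 - cayley z = 2 * \<i> / (z + \<i>)"
    by (simp_all add: cayley_def field_simps)
  then show ?thesis using \<open>z + \<i> \<noteq> 0\<close> by (simp add: cayley_inv_def)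
qed

lemma Im_cayley_inv_pos:
  assumes "cmod w < 1"
  shows "Im (cayley_inv w) > 0"
proof -
  have ne: "1 - w \<noteq> 0" using assms by auto
  have "Im (cayley_inv w) = (1 - (cmod w)^2) / (cmod (1 - w))^2"
    unfolding cayley_inv_def cmod_power2 using ne
    by (simp add: Im_divide power2_eq_square algebra_simps)
  moreover have "(cmod w)^2 < 1" using assms by (simp add: power_less_one_iff)
  ultimately show ?thesis using ne by simp
qed

lemma cayley_cayley_inv:
  assumes "cmod w < 1"
  shows "cayley (cayley_inv w) = w"
proof -
  have "1 - w \<noteq> 0" using assms by auto
  then show ?thesis by (simp add: cayley_def cayley_inv_def field_simps)
qed

lemma norm_klein_coord_less_1: "Im z > 0 \<Longrightarrow> cmod (klein_coord z) < 1"
  by (simp add: klein_coord_def norm_cayley_less_1 norm_poincare_to_klein_less_1)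

lemma Im_klein_point_pos: "cmod u < 1 \<Longrightarrow> Im (klein_point u) > 0"
  by (simp add: klein_point_def Im_cayley_inv_pos norm_klein_to_poincare_less_1)

lemma cayley_klein_point: "cmod u < 1 \<Longrightarrow> cayley (klein_point u) = klein_to_poincare u"
  by (simp add: klein_point_def cayley_cayley_inv norm_klein_to_poincare_less_1)

lemma klein_coord_klein_point: "cmod u < 1 \<Longrightarrow> klein_coord (klein_point u) = u"
  by (simp add: klein_coord_def cayley_klein_point poincare_to_klein_to_poincare)

lemma klein_point_klein_coord: "Im z > 0 \<Longrightarrow> klein_point (klein_coord z) = z"
  using norm_cayley_less_1[of z]
  by (simp add: klein_point_def klein_coord_def klein_to_poincare_to_klein cayley_inv_cayley)

lemma continuous_on_cayley: "continuous_on {z. Im z \<ge> 0} cayley"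
proof -
  have "z + \<i> \<noteq> 0" if "Im z \<ge> 0" for z using that by (auto simp: complex_eq_iff)
  then show ?thesis unfolding cayley_def by (intro continuous_intros) auto
qed

lemma continuous_poincare_to_klein: "continuous_on UNIV poincare_to_klein"
proof -
  have "1 + (cmod w)^2 \<noteq> 0" for w by (smt (verit) zero_le_power2)
  then show ?thesis unfolding poincare_to_klein_scaleR by (intro continuous_intros) auto
qed

lemma continuous_on_klein_to_poincare: "continuous_on (cball 0 1) klein_to_poincare"
proof -
  have "1 + sqrt (1 - (cmod u)^2) \<noteq> 0" if "u \<in> cball 0 1" for u
    using that by (smt (verit) mem_cball_0 power_le_one norm_ge_zero real_sqrt_ge_zero)
  then show ?thesis unfolding klein_to_poincare_scaleR by (intro continuous_intros) auto
qed

lemma continuous_on_klein_point: "continuous_on (ball 0 1) klein_point"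
proof -
  have "continuous_on (ball 0 1) klein_to_poincare"
    by (rule continuous_on_subset[OF continuous_on_klein_to_poincare]) auto
  moreover have "1 - klein_to_poincare u \<noteq> 0" if "u \<in> ball 0 1" for u
    using norm_klein_to_poincare_less_1[of u] that by auto
  ultimately show ?thesis
    unfolding klein_point_def[abs_def] cayley_inv_def by (intro continuous_intros) auto
qed

lemma open_UHP: "open UHP"
  by (simp add: UHP_def open_halfspace_Im_gt)

lemma open_open_hp:
  assumes "det M = 1"
  shows "open (open_hp M)"
proof -
  have "open_hp M = {z. Im z > 0} \<inter> {z. Re_mob_numer M z > 0}"
    using Re_mob_pos_iff[OF assms] by (auto simp: open_hp_def UHP_def)
  moreover have "open {z. Re_mob_numer M z > 0}"
    unfolding Re_mob_numer_def by (intro open_Collect_less continuous_intros)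
  ultimately show ?thesis by (simp add: open_Int open_halfspace_Im_gt)
qed

lemma open_polygon:
  assumes "finite Ms" "Ms \<subseteq> SL2"
  shows "open (UHP \<inter> \<Inter>(open_hp ` Ms))"
  using assms open_open_hp by (intro open_Int open_UHP open_Inter) (auto simp: SL2_def)

lemma hyp_area_pos:
  assumes "open U" "z \<in> U" "U \<subseteq> S \<inter> UHP"
  shows "hyp_area S > 0"
proof -
  obtain r where r: "r > 0" "ball z r \<subseteq> U" using assms(1,2) open_contains_ball by blast
  define c where "c = 1 / (Im z + r)^2"
  have z: "Im z > 0" using assms(2,3) by (auto simp: UHP_def)
  then have c: "c > 0" using r unfolding c_def by simp
  have bound: "ennreal c * indicator (ball z r) x \<le> ennreal (indicator S x / (Im x)^2)" for x
  proof (cases "x \<in> ball z r")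
    case True
    then have x: "x \<in> S" "Im x > 0" using r assms(3) by (auto simp: UHP_def)
    have "Im x - Im z \<le> cmod (x - z)" using abs_Im_le_cmod[of "x - z"] by simp
    also have "\<dots> < r" using True by (simp add: dist_norm norm_minus_commute)
    finally have "(Im x)^2 \<le> (Im z + r)^2" using x by (intro power_mono) auto
    then have "c \<le> 1 / (Im x)^2" unfolding c_def using x z r by (intro divide_left_mono) auto
    then show ?thesis using True x by (simp add: ennreal_leI)
  qed simp
  have "0 < ennreal c * emeasure lborel (ball z r)"
    using c r by (simp add: emeasure_ball ennreal_mult'[symmetric])
  also have "\<dots> = (\<integral>\<^sup>+ x. ennreal c * indicator (ball z r) x \<partial>lborel)"
    by (rule nn_integral_cmult_indicator[symmetric]) simp
  also have "\<dots> \<le> hyp_area S"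
    unfolding hyp_area_def by (rule nn_integral_mono) (rule bound)
  finally show ?thesis .
qed

lemma inner_eq_0_transfer:
  fixes m n d e :: complex
  assumes "d \<noteq> 0" "m \<noteq> 0" "m \<bullet> d = 0" "n \<bullet> d = 0" "m \<bullet> e = 0"
  shows "n \<bullet> e = 0"
proof -
  \<comment> \<open>in the plane, two vectors orthogonal to the same nonzero vector are parallel\<close>
  have "Re d * (Re m * Im n - Im m * Re n) = 0" "Im d * (Re m * Im n - Im m * Re n) = 0"
    using assms(3,4) unfolding inner_complex_def by algebra+
  then have par: "Re m * Im n = Im m * Re n" using assms(1) by (auto simp: complex_eq_iff)
  have "Re m * (n \<bullet> e) = Re n * (m \<bullet> e)" "Im m * (n \<bullet> e) = Im n * (m \<bullet> e)"
    using par unfolding inner_complex_def by algebra+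
  then show ?thesis using assms(2,5) by (auto simp: complex_eq_iff)
qed

lemma geodesic_line_klein:
  assumes "det M = 1"
  shows "geodesic_line M = {z. Im z > 0 \<and> klein_aff M (klein_coord z) = 0}"
  using klein_aff_klein_coord_eq_0_iff[OF assms] by (auto simp: geodesic_line_def UHP_def)

lemma geodesic_line_unique:
  assumes "det M = 1" "det N = 1" "a \<noteq> b"
    and "a \<in> geodesic_line M" "b \<in> geodesic_line M" "a \<in> geodesic_line N" "b \<in> geodesic_line N"
  shows "geodesic_line N \<subseteq> geodesic_line M"
proof
  fix z assume "z \<in> geodesic_line N"
  then have z: "Im z > 0" "klein_aff N (klein_coord z) = 0"
    using geodesic_line_klein[OF assms(2)] by auto
  have a: "Im a > 0" "klein_aff M (klein_coord a) = 0" "klein_aff N (klein_coord a) = 0"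
    using assms(4,6) geodesic_line_klein[OF assms(1)] geodesic_line_klein[OF assms(2)] by auto
  have b: "Im b > 0" "klein_aff M (klein_coord b) = 0" "klein_aff N (klein_coord b) = 0"
    using assms(5,7) geodesic_line_klein[OF assms(1)] geodesic_line_klein[OF assms(2)] by auto
  have "klein_coord b - klein_coord a \<noteq> 0"
    using assms(3) klein_point_klein_coord[OF a(1)] klein_point_klein_coord[OF b(1)] by auto
  then have "klein_normal M \<bullet> (klein_coord z - klein_coord a) = 0"
  proof (rule inner_eq_0_transfer)
    show "klein_normal N \<noteq> 0" using assms(2) by (rule klein_normal_nonzero)
    show "klein_normal N \<bullet> (klein_coord b - klein_coord a) = 0"
      using klein_aff_diff[of N "klein_coord b" "klein_coord a"] a b by simp
    show "klein_normal M \<bullet> (klein_coord b - klein_coord a) = 0"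
      using klein_aff_diff[of M "klein_coord b" "klein_coord a"] a b by simp
    show "klein_normal N \<bullet> (klein_coord z - klein_coord a) = 0"
      using klein_aff_diff[of N "klein_coord z" "klein_coord a"] a z by simp
  qed
  then have "klein_aff M (klein_coord z) = 0"
    using klein_aff_diff[of M "klein_coord z" "klein_coord a"] a by simp
  then show "z \<in> geodesic_line M" using geodesic_line_klein[OF assms(1)] z by simp
qed

lemma is_edge_connected_component:
  assumes "\<sigma> \<in> SL2" "connected A" "A \<subseteq> bdF F \<inter> geodesic_line \<sigma>" "a \<in> A" "b \<in> A" "a \<noteq> b"
  shows "is_edge F (connected_component_set (bdF F \<inter> geodesic_line \<sigma>) a)"
    (is "is_edge F ?E")
proof -
  have AE: "A \<subseteq> ?E" by (rule connected_component_maximal[OF assms(4,2,3)])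
  have EG: "?E \<subseteq> bdF F \<inter> geodesic_line \<sigma>" by (rule connected_component_subset)
  show ?thesis unfolding is_edge_def
  proof (intro conjI allI impI)
    show "?E \<subseteq> bdF F" using EG by blast
    show "connected ?E" by simp
    show "geodesic_subset ?E" unfolding geodesic_subset_def using assms(1) EG by blast
    show "\<exists>x\<in>?E. \<exists>y\<in>?E. x \<noteq> y" using AE assms(4-6) by blast
    fix E' assume E': "?E \<subseteq> E' \<and> E' \<subseteq> bdF F \<and> connected E' \<and> geodesic_subset E'"
    then obtain M where M: "M \<in> SL2" "E' \<subseteq> geodesic_line M" by (auto simp: geodesic_subset_def)
    have "a \<in> geodesic_line M" "b \<in> geodesic_line M" using AE assms(4,5) E' M by blast+
    moreover have "a \<in> geodesic_line \<sigma>" "b \<in> geodesic_line \<sigma>" using assms(3-5) by blast+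
    ultimately have "geodesic_line M \<subseteq> geodesic_line \<sigma>"
      using geodesic_line_unique[of \<sigma> M a b] assms(1,6) M(1) by (simp add: SL2_def)
    then have "E' \<subseteq> ?E" using E' M AE assms(4) by (intro connected_component_maximal) auto
    then show "E' = ?E" using E' by blast
  qed
qed

lemma ends_subset_closure_cayley:
  assumes "F \<subseteq> UHP" "I \<subseteq> closure F"
  shows "ends I \<subseteq> closure (cayley ` F)"
proof -
  have "closure F \<subseteq> {z. Im z \<ge> 0}"
    using assms(1) by (intro closure_minimal) (auto simp: UHP_def closed_halfspace_Im_ge)
  then have "cayley ` closure F \<subseteq> closure (cayley ` F)"
    by (intro continuous_image_closure_subset[OF continuous_on_cayley])
  then have "closure (cayley ` I) \<subseteq> closure (cayley ` F)"
    using assms(2) by (intro closure_minimal) auto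
  then show ?thesis unfolding ends_def by blast
qed

lemma isCont_in_closure_image:
  fixes f :: "'a::metric_space \<Rightarrow> 'b::metric_space"
  assumes "isCont f x" "x \<in> closure S"
  shows "f x \<in> closure (f ` S)"
proof -
  from assms(2) obtain s where s: "\<forall>n. s n \<in> S" "s \<longlonglongrightarrow> x"
    unfolding closure_sequential by blast
  then have "(\<lambda>n. f (s n)) \<longlonglongrightarrow> f x" using assms(1) isCont_tendsto_compose by blast
  moreover have "\<forall>n. f (s n) \<in> f ` S" using s(1) by blast
  ultimately show ?thesis
    unfolding closure_sequential by (auto intro!: exI[of _ "\<lambda>n. f (s n)"])
qed

lemma open_segment_subset_ball:
  fixes a b c :: "'a::euclidean_space"
  assumes "a \<in> cball c r" "b \<in> cball c r"
  shows "open_segment a b \<subseteq> ball c r"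
proof
  fix x assume "x \<in> open_segment a b"
  then have "dist c x < dist c a \<or> dist c x < dist c b" by (rule dist_decreases_open_segment)
  then show "x \<in> ball c r" using assms by auto
qed

section \<open>The chord through two ideal boundary points\<close>

lemma open_klein_polygon: "finite Ms \<Longrightarrow> open (klein_polygon Ms)"
  unfolding klein_polygon_def klein_aff_neg_eq_halfspace
  by (intro open_Int open_ball open_INT) (auto simp: open_halfspace_lt)

lemma convex_klein_polygon: "convex (klein_polygon Ms)"
  unfolding klein_polygon_def klein_aff_neg_eq_halfspace
  by (intro convex_Int convex_ball convex_INT) (auto simp: convex_halfspace_lt)

lemma klein_coord_in_klein_polygon_iff:
  assumes "Ms \<subseteq> SL2" "Im z > 0"
  shows "klein_coord z \<in> klein_polygon Ms \<longleftrightarrow> z \<in> UHP \<inter> \<Inter>(open_hp ` Ms)"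
proof -
  have "klein_aff M (klein_coord z) < 0 \<longleftrightarrow> z \<in> open_hp M" if "M \<in> Ms" for M
    using that assms by (intro klein_aff_klein_coord_neg_iff) (auto simp: SL2_def)
  then show ?thesis
    using assms(2) norm_klein_coord_less_1[OF assms(2)] by (auto simp: klein_polygon_def UHP_def)
qed

lemma klein_point_in_polygon:
  assumes "Ms \<subseteq> SL2" "u \<in> klein_polygon Ms"
  shows "klein_point u \<in> UHP \<inter> \<Inter>(open_hp ` Ms)"
proof -
  have "cmod u < 1" using assms(2) by (simp add: klein_polygon_def)
  then show ?thesis
    using klein_coord_in_klein_polygon_iff[OF assms(1) Im_klein_point_pos] klein_coord_klein_point assms(2)
    by simp
qed

lemma closed_segment_in_supporting_hyperplane:
  fixes C :: "'a::euclidean_space set"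
  assumes "a \<noteq> 0" "open C" "convex C" "C \<subseteq> {x. a \<bullet> x \<ge> b}"
    and "p \<in> closure C" "q \<in> closure C" "a \<bullet> p = b" "a \<bullet> q = b"
  shows "closed_segment p q \<subseteq> (closure C - C) \<inter> {x. a \<bullet> x = b}"
proof -
  have "closed_segment p q \<subseteq> closure C \<inter> {x. a \<bullet> x = b}"
    using assms(3,5-8) by (intro closed_segment_subset convex_Int convex_closure convex_hyperplane) auto
  moreover have "C \<subseteq> {x. a \<bullet> x > b}"
    using interior_maximal[OF assms(4,2)] assms(1) by simp
  ultimately show ?thesis by auto
qed

lemma klein_point_in_bdF:
  assumes "Ms \<subseteq> SL2" "cmod u < 1" "u \<in> closure (klein_polygon Ms) - klein_polygon Ms"
  shows "klein_point u \<in> bdF (UHP \<inter> \<Inter>(open_hp ` Ms))"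
proof -
  have "isCont klein_point u"
    using continuous_on_klein_point assms(2) by (simp add: continuous_on_eq_continuous_at)
  then have "klein_point u \<in> closure (klein_point ` klein_polygon Ms)"
    using assms(3) by (intro isCont_in_closure_image) auto
  also have "\<dots> \<subseteq> closure (UHP \<inter> \<Inter>(open_hp ` Ms))"
    using klein_point_in_polygon[OF assms(1)] by (intro closure_mono) auto
  finally have "klein_point u \<in> closure (UHP \<inter> \<Inter>(open_hp ` Ms))" .
  moreover have "klein_point u \<notin> UHP \<inter> \<Inter>(open_hp ` Ms)"
    using klein_coord_in_klein_polygon_iff[OF assms(1) Im_klein_point_pos[OF assms(2)]]
      klein_coord_klein_point[OF assms(2)] assms(3) by simp
  ultimately show ?thesis
    using Im_klein_point_pos[OF assms(2)] by (simp add: bdF_def Fbar_def UHP_def)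
qed

lemma closure_klein_polygon_subset_cball: "closure (klein_polygon Ms) \<subseteq> cball 0 1"
  by (rule closure_minimal) (auto simp: klein_polygon_def)

lemma klein_chord_in_bdF:
  assumes Ms: "finite Ms" "Ms \<subseteq> SL2" and F: "F = UHP \<inter> \<Inter>(open_hp ` Ms)"
    and \<sigma>: "\<sigma> \<in> SL2" "F \<inter> open_hp \<sigma> = {}"
    and pq: "p \<in> closure (klein_polygon Ms)" "q \<in> closure (klein_polygon Ms)"
      "klein_aff \<sigma> p = 0" "klein_aff \<sigma> q = 0"
  shows "klein_point ` open_segment p q \<subseteq> bdF F \<inter> geodesic_line \<sigma>"
proof -
  have det: "det \<sigma> = 1" using \<sigma>(1) by (simp add: SL2_def)
  have "klein_polygon Ms \<subseteq> {u. klein_aff \<sigma> u \<ge> 0}"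
  proof
    fix v assume v: "v \<in> klein_polygon Ms"
    then have v_ball: "cmod v < 1" by (simp add: klein_polygon_def)
    have "klein_point v \<notin> open_hp \<sigma>" using klein_point_in_polygon[OF Ms(2) v] \<sigma>(2) F by blast
    then show "v \<in> {u. klein_aff \<sigma> u \<ge> 0}"
      using klein_aff_klein_coord_neg_iff[OF det Im_klein_point_pos[OF v_ball]]
        klein_coord_klein_point[OF v_ball] by simp
  qed
  then have "closed_segment p q \<subseteq> (closure (klein_polygon Ms) - klein_polygon Ms)
      \<inter> {u. klein_aff \<sigma> u = 0}"
    unfolding klein_aff_zero_eq_hyperplane klein_aff_nonneg_eq_halfspace
    using klein_normal_nonzero[OF det] open_klein_polygon[OF Ms(1)] convex_klein_polygon pq
    by (intro closed_segment_in_supporting_hyperplane) (auto simp: klein_aff_def)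
  moreover have "p \<in> cball 0 1" "q \<in> cball 0 1"
    using pq(1,2) closure_klein_polygon_subset_cball by blast+
  then have "open_segment p q \<subseteq> ball 0 1" by (rule open_segment_subset_ball)
  ultimately have chord: "u \<in> closure (klein_polygon Ms) - klein_polygon Ms"
    "klein_aff \<sigma> u = 0" "cmod u < 1" if "u \<in> open_segment p q" for u
    using that open_closed_segment[OF that] by auto
  show ?thesis
  proof
    fix x assume "x \<in> klein_point ` open_segment p q"
    then obtain u where u: "u \<in> open_segment p q" and x: "x = klein_point u" by blast
    show "x \<in> bdF F \<inter> geodesic_line \<sigma>"
      using klein_point_in_bdF[OF Ms(2) chord(3)[OF u] chord(1)[OF u]] chord(2)[OF u]
        geodesic_line_klein[OF det] Im_klein_point_pos[OF chord(3)[OF u]]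
        klein_coord_klein_point[OF chord(3)[OF u]] x F by auto
  qed
qed

lemma exists_open_segment_neq_midpoint:
  fixes p q :: "'a::euclidean_space"
  assumes "p \<noteq> q"
  shows "\<exists>v\<in>open_segment p q. v \<noteq> midpoint p q"
proof (rule ccontr)
  assume "\<not> ?thesis"
  then have "closure (open_segment p q) \<subseteq> {midpoint p q}"
    by (intro closure_minimal) auto
  then have "closed_segment p q \<subseteq> {midpoint p q}" using assms by simp
  then have "p = midpoint p q" "q = midpoint p q" by (meson ends_in_segment singletonD subsetD)+
  then show False using assms by simp
qed

lemma edge_through_klein_chord:
  assumes "\<sigma> \<in> SL2" "p \<noteq> q" "p \<in> cball 0 1" "q \<in> cball 0 1"
    and A: "klein_point ` open_segment p q \<subseteq> bdF F \<inter> geodesic_line \<sigma>"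
  shows "\<exists>E. is_edge F E \<and> klein_to_poincare p \<in> closure (cayley ` E)
                        \<and> klein_to_poincare q \<in> closure (cayley ` E)"
proof -
  have seg: "open_segment p q \<subseteq> ball 0 1" "closed_segment p q \<subseteq> cball 0 1"
    using assms(3,4) by (simp_all add: open_segment_subset_ball closed_segment_subset convex_cball)
  then have in_ball: "cmod u < 1" if "u \<in> open_segment p q" for u
    using that by auto
  obtain v where v: "v \<in> open_segment p q" "v \<noteq> midpoint p q"
    using exists_open_segment_neq_midpoint[OF assms(2)] by blast
  have mid: "midpoint p q \<in> open_segment p q" using assms(2) by simp
  define a where "a = klein_point (midpoint p q)"
  define E where "E = connected_component_set (bdF F \<inter> geodesic_line \<sigma>) a"
  have conn: "connected (klein_point ` open_segment p q)"
    using continuous_on_subset[OF continuous_on_klein_point seg(1)]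
    by (intro connected_continuous_image convex_connected convex_open_segment)
  have a: "a \<in> klein_point ` open_segment p q" using mid unfolding a_def by (rule imageI)
  have "klein_point v \<noteq> a"
    using klein_coord_klein_point[OF in_ball[OF v(1)]] klein_coord_klein_point[OF in_ball[OF mid]]
      v(2) unfolding a_def by metis
  then have edge: "is_edge F E"
    unfolding E_def using v(1) by (intro is_edge_connected_component[OF assms(1) conn A a]) auto
  have "klein_point ` open_segment p q \<subseteq> E"
    unfolding E_def by (rule connected_component_maximal[OF a conn A])
  moreover have "klein_to_poincare ` open_segment p q = cayley ` klein_point ` open_segment p q"
    using cayley_klein_point[OF in_ball] by (simp add: image_image cong: image_cong)
  ultimately have "klein_to_poincare ` open_segment p q \<subseteq> cayley ` E" by auto
  have "klein_to_poincare ` closed_segment p q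
      \<subseteq> closure (klein_to_poincare ` open_segment p q)"
    using continuous_image_closure_subset[OF continuous_on_klein_to_poincare, of "open_segment p q"]
      seg(2) assms(2) by simp
  also have "\<dots> \<subseteq> closure (cayley ` E)"
    by (rule closure_mono) fact
  finally show ?thesis using edge by auto
qed

lemma exists_edge_joining:
  assumes Ms: "finite Ms" "Ms \<subseteq> SL2" and F: "F = UHP \<inter> \<Inter>(open_hp ` Ms)"
    and \<sigma>: "\<sigma> \<in> SL2" "F \<inter> open_hp \<sigma> = {}"
    and z: "z0 \<in> closure (cayley ` F)" "z1 \<in> closure (cayley ` F)" "z0 \<noteq> z1"
      "dmob \<sigma> z0 \<in> \<real>" "dmob \<sigma> z1 \<in> \<real>"
  shows "\<exists>E. is_edge F E \<and> z0 \<in> closure (cayley ` E) \<and> z1 \<in> closure (cayley ` E)"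
proof -
  define p q where "p = poincare_to_klein z0" and "q = poincare_to_klein z1"
  have "closure (cayley ` F) \<subseteq> cball 0 1"
    by (rule closure_minimal) (auto simp: F UHP_def intro: less_imp_le[OF norm_cayley_less_1])
  then have z_norm: "cmod z0 \<le> 1" "cmod z1 \<le> 1" using z by auto
  then have z_pq: "z0 = klein_to_poincare p" "z1 = klein_to_poincare q"
    by (simp_all add: p_def q_def klein_to_poincare_to_klein)
  have "poincare_to_klein ` closure (cayley ` F) \<subseteq> closure (poincare_to_klein ` cayley ` F)"
    by (rule continuous_image_closure_subset[OF continuous_poincare_to_klein]) simp
  also have "poincare_to_klein ` cayley ` F \<subseteq> klein_polygon Ms"
    using klein_coord_in_klein_polygon_iff[OF Ms(2)] by (auto simp: F UHP_def klein_coord_def)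
  finally have p: "p \<in> closure (klein_polygon Ms)" and q: "q \<in> closure (klein_polygon Ms)"
    using z(1,2) closure_mono by (auto simp: p_def q_def)
  moreover have "klein_aff \<sigma> p = 0" "klein_aff \<sigma> q = 0"
    using dmob_in_Reals_iff \<sigma>(1) z_norm z(4,5) by (auto simp: p_def q_def SL2_def)
  ultimately have "klein_point ` open_segment p q \<subseteq> bdF F \<inter> geodesic_line \<sigma>"
    using p q by (intro klein_chord_in_bdF[OF Ms F \<sigma>])
  moreover have "p \<noteq> q" using z(3) z_pq by auto
  moreover have "p \<in> cball 0 1" "q \<in> cball 0 1"
    using p q closure_klein_polygon_subset_cball by blast+
  ultimately show ?thesis using edge_through_klein_chord[OF \<sigma>(1)] z_pq by simp
qed

theorem lemma5p3:
  fixes \<Gamma> :: "mat2 set" and F I J :: "complex set"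
    and \<tau> \<sigma> :: mat2 and z0 z1 :: complex
  assumes disc: "discrete_subgroup \<Gamma>"
    and fund: "fundamental_polygon \<Gamma> F"
    and covol: "hyp_area F < \<infinity>"
    and I: "boundary_subsegment F I"
    and J: "boundary_subsegment F J"
    and disj: "I \<inter> J = {}"
    and edges: "\<not> (\<exists>E. is_edge F E \<and> (\<exists>e\<in>ends I. e \<in> closure (cayley ` E))
                                  \<and> (\<exists>e\<in>ends J. e \<in> closure (cayley ` E)))"
    and tau: "\<tau> \<in> SL2" "\<i> \<in> mob \<tau> ` F"
    and z0: "z0 \<in> ends I" and z1: "z1 \<in> ends J"
    and arc: "pos_arc \<tau> (cbd F) z1 z0 \<inter> cayley ` (I \<union> J) = {}"
    and sigma: "\<sigma> \<in> SL2" "dmob \<sigma> z0 \<in> \<real>" "dmob \<sigma> z1 \<in> \<real>"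
               "Re (dmob \<sigma> z1) < Re (dmob \<sigma> z0)"
  shows "hyp_area (closed_hp \<sigma> \<inter> F) > 0"
proof (rule ccontr)
  assume no_area: "\<not> hyp_area (closed_hp \<sigma> \<inter> F) > 0"
  obtain Ms where Ms: "finite Ms" "Ms \<subseteq> SL2" and F: "F = UHP \<inter> \<Inter>(open_hp ` Ms)"
    using fund unfolding fundamental_polygon_def by blast
  have "F \<inter> open_hp \<sigma> = {}"
  proof (rule ccontr)
    assume "F \<inter> open_hp \<sigma> \<noteq> {}"
    then obtain z where "z \<in> F \<inter> open_hp \<sigma>" by blast
    moreover have "open (F \<inter> open_hp \<sigma>)"
      using open_polygon[OF Ms] open_open_hp sigma(1) F by (simp add: SL2_def open_Int)
    moreover have "F \<inter> open_hp \<sigma> \<subseteq> (closed_hp \<sigma> \<inter> F) \<inter> UHP"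
      by (auto simp: open_hp_def closed_hp_def)
    ultimately show False using hyp_area_pos no_area by blast
  qed
  moreover have "z0 \<in> closure (cayley ` F)" "z1 \<in> closure (cayley ` F)"
    using ends_subset_closure_cayley[of F] I J z0 z1 F
    by (auto simp: boundary_subsegment_def bdF_def Fbar_def)
  moreover have "z0 \<noteq> z1" using sigma(4) by auto
  ultimately obtain E where "is_edge F E" "z0 \<in> closure (cayley ` E)" "z1 \<in> closure (cayley ` E)"
    using exists_edge_joining[OF Ms F sigma(1)] sigma(2,3) by blast
  then show False using edges z0 z1 by blast
qed

end
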